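(* Let $G$ be an abelian Hausdorff topological group and $A\subseteq G$ with $0\notin A$. Then $A$ is absolutely Cauchy summable in $G$ if and only if the Kalton map $K_A:S_A\to G$ is continuous.
   Context: For $a\in G$, $\langle a\rangle$ is the cyclic subgroup generated by $a$ with the subspace topology. $P_A=\prod_{a\in A}\langle a\rangle$ carries the Tychonoff product topology and $S_A=\bigoplus_{a\in A}\langle a\rangle$ (finitely supported elements of $P_A$) the subspace topology. The Kalton map $K_A:S_A\to G$ is the unique group homomorphism extending each inclusion $\langle a\rangle\to G$, $a\in A$. $A$ is absolutely Cauchy summable if for every neighbourhood $U$ of $0$ there is a finite $F\subseteq A$ such that the subgroup $\langle A\setminus F\rangle$ generated by $A\setminus F$ is contained in $U$. *)

theory Defs
  imports "HOL-Analysis.Analysis"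
begin

definition gen_subgroup :: "'a::ab_group_add set \<Rightarrow> 'a set" where
  "gen_subgroup S = \<Inter>{H. S \<subseteq> H \<and> 0 \<in> H \<and> (\<forall>x\<in>H. \<forall>y\<in>H. x - y \<in> H)}"

definition cyclic_subgroup :: "'a::ab_group_add \<Rightarrow> 'a set" where
  "cyclic_subgroup a = gen_subgroup {a}"

definition P_top :: "'a::{topological_ab_group_add} set \<Rightarrow> ('a \<Rightarrow> 'a) topology" where
  "P_top A = product_topology (\<lambda>a. subtopology euclidean (cyclic_subgroup a)) A"

definition S_set :: "'a::{topological_ab_group_add} set \<Rightarrow> ('a \<Rightarrow> 'a) set" where
  "S_set A = {f \<in> topspace (P_top A). finite {a \<in> A. f a \<noteq> 0}}"

definition S_top :: "'a::{topological_ab_group_add} set \<Rightarrow> ('a \<Rightarrow> 'a) topology" where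
  "S_top A = subtopology (P_top A) (S_set A)"

text \<open>Kalton map: the homomorphism S_A \<rightarrow> G extending the inclusions, i.e. the finite sum.\<close>
definition kalton_map :: "'a::{topological_ab_group_add} set \<Rightarrow> ('a \<Rightarrow> 'a) \<Rightarrow> 'a" where
  "kalton_map A f = (\<Sum>a\<in>{a \<in> A. f a \<noteq> 0}. f a)"

definition abs_cauchy_summable :: "'a::{topological_ab_group_add} set \<Rightarrow> bool" where
  "abs_cauchy_summable A \<longleftrightarrow>
     (\<forall>U. open U \<and> 0 \<in> U \<longrightarrow> (\<exists>F. finite F \<and> F \<subseteq> A \<and> gen_subgroup (A - F) \<subseteq> U))"

end

theory Submission
  imports Defs
begin

text \<open>
  For \<open>F \<subseteq> A\<close>, the Kalton map sends the elements of \<open>S\<^sub>A\<close> vanishing on \<open>F\<close>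
  exactly onto the subgroup \<open>\<langle>A - F\<rangle>\<close>. Since these elements form the traces on \<open>S\<^sub>A\<close> of the
  basic neighbourhoods of \<open>0\<close> in the product topology, continuity of \<open>K\<^sub>A\<close> at \<open>0\<close> says precisely
  that every neighbourhood of \<open>0\<close> contains some \<open>\<langle>A - F\<rangle>\<close>. Continuity at an arbitrary point
  \<open>f\<^sub>0\<close> follows by splitting \<open>K\<^sub>A f\<close> into the sum over a finite \<open>F \<supseteq> supp f\<^sub>0\<close>, which depends
  continuously on \<open>f\<close>, plus a remainder in \<open>\<langle>A - F\<rangle>\<close>.
\<close>

lemma gen_subgroup_subset: "S \<subseteq> gen_subgroup S"
  unfolding gen_subgroup_def by auto

lemma gen_subgroup_zero: "0 \<in> gen_subgroup S"
  unfolding gen_subgroup_def by auto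

lemma gen_subgroup_diff: "x \<in> gen_subgroup S \<Longrightarrow> y \<in> gen_subgroup S \<Longrightarrow> x - y \<in> gen_subgroup S"
  unfolding gen_subgroup_def by auto

lemma gen_subgroup_least:
  "S \<subseteq> H \<Longrightarrow> 0 \<in> H \<Longrightarrow> (\<And>x y. x \<in> H \<Longrightarrow> y \<in> H \<Longrightarrow> x - y \<in> H) \<Longrightarrow> gen_subgroup S \<subseteq> H"
  unfolding gen_subgroup_def by auto

lemma gen_subgroup_mono: "S \<subseteq> T \<Longrightarrow> gen_subgroup S \<subseteq> gen_subgroup T"
  by (meson gen_subgroup_diff gen_subgroup_least gen_subgroup_subset gen_subgroup_zero order_trans)

lemma gen_subgroup_add: "x \<in> gen_subgroup S \<Longrightarrow> y \<in> gen_subgroup S \<Longrightarrow> x + y \<in> gen_subgroup S"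
  using gen_subgroup_diff[of x S "0 - y"] gen_subgroup_diff[of 0 S y] gen_subgroup_zero[of S] by simp

lemma gen_subgroup_sum:
  "finite T \<Longrightarrow> (\<And>a. a \<in> T \<Longrightarrow> f a \<in> gen_subgroup S) \<Longrightarrow> sum f T \<in> gen_subgroup S"
  by (induction T rule: finite_induct) (auto simp: gen_subgroup_zero gen_subgroup_add)

lemma cyclic_subgroup_subset_gen_subgroup: "a \<in> S \<Longrightarrow> cyclic_subgroup a \<subseteq> gen_subgroup S"
  unfolding cyclic_subgroup_def by (rule gen_subgroup_mono) auto

lemma self_in_cyclic_subgroup: "a \<in> cyclic_subgroup a"
  unfolding cyclic_subgroup_def using gen_subgroup_subset by blast

lemma zero_in_cyclic_subgroup: "0 \<in> cyclic_subgroup a"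
  unfolding cyclic_subgroup_def by (rule gen_subgroup_zero)

lemma diff_in_cyclic_subgroup:
  "x \<in> cyclic_subgroup a \<Longrightarrow> y \<in> cyclic_subgroup a \<Longrightarrow> x - y \<in> cyclic_subgroup a"
  unfolding cyclic_subgroup_def by (rule gen_subgroup_diff)

lemma topspace_P_top: "topspace (P_top A) = (\<Pi>\<^sub>E a\<in>A. cyclic_subgroup a)"
  unfolding P_top_def by simp

lemma topspace_S_top: "topspace (S_top A) = S_set A"
  unfolding S_top_def S_set_def by auto

lemma S_set_iff:
  "f \<in> S_set A \<longleftrightarrow> f \<in> (\<Pi>\<^sub>E a\<in>A. cyclic_subgroup a) \<and> finite {a \<in> A. f a \<noteq> 0}"
  unfolding S_set_def topspace_P_top by simp

lemma continuous_map_P_top_sum: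
  assumes "finite F" "F \<subseteq> A"
  shows "continuous_map (P_top A) euclidean (\<lambda>f. \<Sum>a\<in>F. f a)"
proof -
  have "continuous_map (P_top A) euclidean (\<lambda>f. f a)" if "a \<in> A" for a
    unfolding P_top_def
    by (rule continuous_map_into_fulltopology, rule continuous_map_product_projection) (fact that)
  with assms show ?thesis
    by (simp add: continuous_map_atin tendsto_sum subset_iff)
qed

lemma kalton_map_eq_sum:
  assumes "finite T" "T \<subseteq> A" "{a \<in> A. f a \<noteq> 0} \<subseteq> T"
  shows "kalton_map A f = sum f T"
  unfolding kalton_map_def
  by (rule sum.mono_neutral_left) (use assms in \<open>auto intro: finite_subset\<close>)

lemma zero_in_S_set: "restrict (\<lambda>_. 0) A \<in> S_set A"
  by (auto simp: S_set_iff zero_in_cyclic_subgroup)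

lemma kalton_map_zero: "kalton_map A (restrict (\<lambda>_. 0) A) = 0"
  by (simp add: kalton_map_def)

lemma unit_vector_in_S_set: "restrict (\<lambda>b. if b = a then a else 0) A \<in> S_set A"
  by (auto simp: S_set_iff self_in_cyclic_subgroup zero_in_cyclic_subgroup
      intro: finite_subset[of _ "{a}"])

lemma kalton_map_unit_vector:
  assumes "a \<in> A"
  shows "kalton_map A (restrict (\<lambda>b. if b = a then a else 0) A) = a"
proof -
  have "kalton_map A (restrict (\<lambda>b. if b = a then a else 0) A)
      = sum (restrict (\<lambda>b. if b = a then a else 0) A) {a}"
    by (rule kalton_map_eq_sum) (use assms in auto)
  with assms show ?thesis by simp
qed

lemma vanishing_on_in_S_set:
  assumes "f \<in> S_set A" "F \<subseteq> A"
  shows "(\<lambda>a. if a \<in> F then 0 else f a) \<in> S_set A"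
  unfolding S_set_iff
proof
  show "(\<lambda>a. if a \<in> F then 0 else f a) \<in> (\<Pi>\<^sub>E a\<in>A. cyclic_subgroup a)"
    using assms by (auto simp: S_set_iff zero_in_cyclic_subgroup)
  have "{a \<in> A. (if a \<in> F then 0 else f a) \<noteq> 0} \<subseteq> {a \<in> A. f a \<noteq> 0}"
    by auto
  then show "finite {a \<in> A. (if a \<in> F then 0 else f a) \<noteq> 0}"
    by (rule finite_subset) (use assms in \<open>simp add: S_set_iff\<close>)
qed

lemma diff_in_S_set:
  assumes "f \<in> S_set A" "g \<in> S_set A"
  shows "restrict (\<lambda>a. f a - g a) A \<in> S_set A"
  unfolding S_set_iff
proof
  show "restrict (\<lambda>a. f a - g a) A \<in> (\<Pi>\<^sub>E a\<in>A. cyclic_subgroup a)"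
    using assms by (auto simp: S_set_iff intro!: diff_in_cyclic_subgroup)
  have "{a \<in> A. restrict (\<lambda>a. f a - g a) A a \<noteq> 0} \<subseteq> {a \<in> A. f a \<noteq> 0} \<union> {a \<in> A. g a \<noteq> 0}"
    by auto
  then show "finite {a \<in> A. restrict (\<lambda>a. f a - g a) A a \<noteq> 0}"
    by (rule finite_subset) (use assms in \<open>simp add: S_set_iff\<close>)
qed

lemma kalton_map_diff:
  assumes "f \<in> S_set A" "g \<in> S_set A"
  shows "kalton_map A (restrict (\<lambda>a. f a - g a) A) = kalton_map A f - kalton_map A g"
proof -
  define T where "T = {a \<in> A. f a \<noteq> 0} \<union> {a \<in> A. g a \<noteq> 0}"
  have T: "finite T" "T \<subseteq> A"
    using assms unfolding T_def S_set_iff by auto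
  have "kalton_map A f = sum f T" "kalton_map A g = sum g T"
    by (rule kalton_map_eq_sum; use T in \<open>auto simp: T_def\<close>)+
  moreover have "kalton_map A (restrict (\<lambda>a. f a - g a) A) = sum (restrict (\<lambda>a. f a - g a) A) T"
    by (rule kalton_map_eq_sum) (use T in \<open>auto simp: T_def\<close>)
  ultimately show ?thesis
    using T by (simp add: sum_subtractf subset_iff)
qed

lemma kalton_map_split:
  assumes "f \<in> S_set A" "finite F" "F \<subseteq> A"
  shows "kalton_map A f = (\<Sum>a\<in>F. f a) + kalton_map A (\<lambda>a. if a \<in> F then 0 else f a)"
proof -
  define T where "T = F \<union> {a \<in> A. f a \<noteq> 0}"
  have T: "finite T" "T \<subseteq> A"
    using assms unfolding T_def S_set_iff by auto
  have "kalton_map A f = sum f F + sum f (T - F)"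
    using T kalton_map_eq_sum[of T A f] sum.subset_diff[of F T f]
    by (auto simp: T_def add.commute)
  moreover have "kalton_map A (\<lambda>a. if a \<in> F then 0 else f a) = sum f (T - F)"
  proof -
    have "kalton_map A (\<lambda>a. if a \<in> F then 0 else f a) = (\<Sum>a\<in>T - F. if a \<in> F then 0 else f a)"
      by (rule kalton_map_eq_sum) (use T in \<open>auto simp: T_def\<close>)
    then show ?thesis by simp
  qed
  ultimately show ?thesis by simp
qed

lemma kalton_map_image_vanishing:
  assumes "F \<subseteq> A"
  shows "kalton_map A ` {f \<in> S_set A. \<forall>a\<in>F. f a = 0} = gen_subgroup (A - F)"
proof
  show "kalton_map A ` {f \<in> S_set A. \<forall>a\<in>F. f a = 0} \<subseteq> gen_subgroup (A - F)"
  proof clarify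
    fix f assume f: "f \<in> S_set A" "\<forall>a\<in>F. f a = 0"
    have "f a \<in> gen_subgroup (A - F)" if "a \<in> A" "f a \<noteq> 0" for a
      using f that cyclic_subgroup_subset_gen_subgroup[of a "A - F"] by (auto simp: S_set_iff)
    with f show "kalton_map A f \<in> gen_subgroup (A - F)"
      unfolding kalton_map_def S_set_iff by (auto intro: gen_subgroup_sum)
  qed
next
  let ?H = "kalton_map A ` {f \<in> S_set A. \<forall>a\<in>F. f a = 0}"
  show "gen_subgroup (A - F) \<subseteq> ?H"
  proof (rule gen_subgroup_least)
    show "A - F \<subseteq> ?H"
    proof
      fix a assume a: "a \<in> A - F"
      let ?e = "restrict (\<lambda>b. if b = a then a else 0) A"
      have "a = kalton_map A ?e"
        using a kalton_map_unit_vector[of a A] by simp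
      moreover have "?e \<in> {f \<in> S_set A. \<forall>b\<in>F. f b = 0}"
        using a assms unit_vector_in_S_set by auto
      ultimately show "a \<in> ?H" by (rule image_eqI)
    qed
    have "restrict (\<lambda>_. 0) A \<in> {f \<in> S_set A. \<forall>b\<in>F. f b = 0}"
      using zero_in_S_set assms by auto
    with kalton_map_zero[of A, symmetric] show "0 \<in> ?H"
      by (rule image_eqI)
    show "x - y \<in> ?H" if x: "x \<in> ?H" and y: "y \<in> ?H" for x y
    proof -
      obtain f where f: "x = kalton_map A f" "f \<in> {f \<in> S_set A. \<forall>a\<in>F. f a = 0}"
        using x by (rule imageE)
      obtain g where g: "y = kalton_map A g" "g \<in> {f \<in> S_set A. \<forall>a\<in>F. f a = 0}"
        using y by (rule imageE)
      have "x - y = kalton_map A (restrict (\<lambda>a. f a - g a) A)"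
        using f g kalton_map_diff[of f A g] by simp
      moreover have "restrict (\<lambda>a. f a - g a) A \<in> {f \<in> S_set A. \<forall>b\<in>F. f b = 0}"
        using f g assms diff_in_S_set by auto
      ultimately show ?thesis by (rule image_eqI)
    qed
  qed
qed

lemma kalton_map_vanishing_on_in_gen_subgroup:
  assumes "f \<in> S_set A" "F \<subseteq> A"
  shows "kalton_map A (\<lambda>a. if a \<in> F then 0 else f a) \<in> gen_subgroup (A - F)"
proof -
  have "(\<lambda>a. if a \<in> F then 0 else f a) \<in> S_set A"
    using assms by (rule vanishing_on_in_S_set)
  then have "kalton_map A (\<lambda>a. if a \<in> F then 0 else f a)
      \<in> kalton_map A ` {f \<in> S_set A. \<forall>a\<in>F. f a = 0}"
    by (intro imageI) simp
  also have "\<dots> = gen_subgroup (A - F)"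
    using assms(2) by (rule kalton_map_image_vanishing)
  finally show ?thesis .
qed

lemma openin_S_top_partial_sum:
  assumes "finite F" "F \<subseteq> A" "open V"
  shows "openin (S_top A) {f \<in> S_set A. (\<Sum>a\<in>F. f a) \<in> V}"
proof -
  have "openin (P_top A) {f \<in> topspace (P_top A). (\<Sum>a\<in>F. f a) \<in> V}"
    using continuous_map_P_top_sum[OF assms(1,2)] assms(3)
    by (simp add: openin_continuous_map_preimage)
  moreover have "{f \<in> S_set A. (\<Sum>a\<in>F. f a) \<in> V}
      = {f \<in> topspace (P_top A). (\<Sum>a\<in>F. f a) \<in> V} \<inter> S_set A"
    unfolding S_set_def by blast
  ultimately show ?thesis
    unfolding S_top_def openin_subtopology by blast
qed

lemma continuous_kalton_map_if_abs_cauchy_summable: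
  assumes "abs_cauchy_summable A"
  shows "continuous_map (S_top A) euclidean (kalton_map A)"
  unfolding continuous_map_eq_topcontinuous_at topcontinuous_at_def topspace_S_top
proof (intro ballI conjI allI impI)
  fix f\<^sub>0 V assume f\<^sub>0: "f\<^sub>0 \<in> S_set A" and V: "openin euclidean V \<and> kalton_map A f\<^sub>0 \<in> V"
  have "open ((\<lambda>p. fst p + snd p) -` V)"
    using V by (intro open_vimage continuous_intros) auto
  moreover have "(kalton_map A f\<^sub>0, 0) \<in> (\<lambda>p. fst p + snd p) -` V"
    using V by simp
  ultimately obtain V\<^sub>1 U where V\<^sub>1U: "open V\<^sub>1" "open U" "(kalton_map A f\<^sub>0, 0) \<in> V\<^sub>1 \<times> U"
    "V\<^sub>1 \<times> U \<subseteq> (\<lambda>p. fst p + snd p) -` V"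
    by (rule open_prod_elim)
  have "0 \<in> U"
    using V\<^sub>1U(3) by simp
  with assms V\<^sub>1U(2) have "\<exists>F\<^sub>0. finite F\<^sub>0 \<and> F\<^sub>0 \<subseteq> A \<and> gen_subgroup (A - F\<^sub>0) \<subseteq> U"
    unfolding abs_cauchy_summable_def by simp
  then obtain F\<^sub>0 where F\<^sub>0: "finite F\<^sub>0" "F\<^sub>0 \<subseteq> A" "gen_subgroup (A - F\<^sub>0) \<subseteq> U"
    by blast
  define F where "F = F\<^sub>0 \<union> {a \<in> A. f\<^sub>0 a \<noteq> 0}"
  have F: "finite F" "F \<subseteq> A"
    using F\<^sub>0 f\<^sub>0 unfolding F_def S_set_iff by auto
  have tail: "kalton_map A (\<lambda>a. if a \<in> F then 0 else f a) \<in> U" if "f \<in> S_set A" for f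
  proof -
    have "gen_subgroup (A - F) \<subseteq> gen_subgroup (A - F\<^sub>0)"
      by (rule gen_subgroup_mono) (auto simp: F_def)
    with F\<^sub>0(3) show ?thesis
      using kalton_map_vanishing_on_in_gen_subgroup[OF that F(2)] by blast
  qed
  define W where "W = {f \<in> S_set A. (\<Sum>a\<in>F. f a) \<in> V\<^sub>1}"
  have "openin (S_top A) W"
    unfolding W_def using F V\<^sub>1U(1) by (rule openin_S_top_partial_sum)
  moreover have "f\<^sub>0 \<in> W"
  proof -
    have "kalton_map A f\<^sub>0 = (\<Sum>a\<in>F. f\<^sub>0 a)"
      using F by (intro kalton_map_eq_sum) (auto simp: F_def)
    with f\<^sub>0 V\<^sub>1U(3) show ?thesis
      unfolding W_def by simp
  qed
  moreover have "kalton_map A f \<in> V" if "f \<in> W" for f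
  proof -
    have f: "f \<in> S_set A" "(\<Sum>a\<in>F. f a) \<in> V\<^sub>1"
      using that unfolding W_def by auto
    have "((\<Sum>a\<in>F. f a), kalton_map A (\<lambda>a. if a \<in> F then 0 else f a)) \<in> V\<^sub>1 \<times> U"
      using f tail by simp
    with V\<^sub>1U(4) show ?thesis
      using kalton_map_split[OF f(1) F] by auto
  qed
  ultimately show "\<exists>W. openin (S_top A) W \<and> f\<^sub>0 \<in> W \<and> (\<forall>f\<in>W. kalton_map A f \<in> V)"
    by blast
qed auto

lemma openin_product_topology_contains_cylinder:
  assumes "openin (product_topology X I) W" "x \<in> W"
  shows "\<exists>F. finite F \<and> F \<subseteq> I \<and>
    (\<forall>y \<in> topspace (product_topology X I). (\<forall>i\<in>F. y i = x i) \<longrightarrow> y \<in> W)"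
proof -
  obtain U where U: "finite {i \<in> I. U i \<noteq> topspace (X i)}" "x \<in> Pi\<^sub>E I U" "Pi\<^sub>E I U \<subseteq> W"
    using assms unfolding openin_product_topology_alt by blast
  have "y \<in> W"
    if y: "y \<in> topspace (product_topology X I)" "\<forall>i\<in>{i \<in> I. U i \<noteq> topspace (X i)}. y i = x i"
    for y
  proof -
    have "y i \<in> U i" if "i \<in> I" for i
    proof (cases "U i = topspace (X i)")
      case True
      then show ?thesis using y(1) that by auto
    next
      case False
      then show ?thesis using y(2) U(2) that by auto
    qed
    moreover have "y \<in> extensional I"
      using y(1) by (simp add: PiE_def)
    ultimately have "y \<in> Pi\<^sub>E I U"
      by (simp add: PiE_def)
    then show ?thesis using U(3) by blast
  qed
  then show ?thesis
    using U(1) by (intro exI[of _ "{i \<in> I. U i \<noteq> topspace (X i)}"]) auto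
qed

lemma abs_cauchy_summable_if_continuous_kalton_map:
  assumes "continuous_map (S_top A) euclidean (kalton_map A)"
  shows "abs_cauchy_summable A"
  unfolding abs_cauchy_summable_def
proof (intro allI impI)
  fix U :: "'a set" assume U: "open U \<and> 0 \<in> U"
  then have "openin (S_top A) {f \<in> S_set A. kalton_map A f \<in> U}"
    using openin_continuous_map_preimage[OF assms, of U] by (simp add: topspace_S_top)
  then obtain W where W: "openin (P_top A) W" "{f \<in> S_set A. kalton_map A f \<in> U} = W \<inter> S_set A"
    unfolding S_top_def openin_subtopology by blast
  have "restrict (\<lambda>_. 0) A \<in> {f \<in> S_set A. kalton_map A f \<in> U}"
    using zero_in_S_set[of A] kalton_map_zero[of A] U by simp
  then have "restrict (\<lambda>_. 0) A \<in> W"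
    unfolding W(2) by blast
  with W(1) have "\<exists>F. finite F \<and> F \<subseteq> A \<and>
      (\<forall>f \<in> topspace (P_top A). (\<forall>a\<in>F. f a = restrict (\<lambda>_. 0) A a) \<longrightarrow> f \<in> W)"
    unfolding P_top_def by (rule openin_product_topology_contains_cylinder)
  then obtain F where F: "finite F" "F \<subseteq> A"
    "\<forall>f \<in> topspace (P_top A). (\<forall>a\<in>F. f a = restrict (\<lambda>_. 0) A a) \<longrightarrow> f \<in> W"
    by blast
  have "gen_subgroup (A - F) = kalton_map A ` {f \<in> S_set A. \<forall>a\<in>F. f a = 0}"
    using F(2) by (rule kalton_map_image_vanishing[symmetric])
  also have "\<dots> \<subseteq> U"
  proof (rule image_subsetI)
    fix f assume f: "f \<in> {f \<in> S_set A. \<forall>a\<in>F. f a = 0}"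
    then have "f \<in> W"
      using F(2) by (intro F(3)[rule_format]) (auto simp: S_set_def)
    with f show "kalton_map A f \<in> U"
      using W(2) by blast
  qed
  finally show "\<exists>F. finite F \<and> F \<subseteq> A \<and> gen_subgroup (A - F) \<subseteq> U"
    using F(1,2) by blast
qed

theorem theorem3p5:
  fixes A :: "'a::{topological_ab_group_add, t2_space} set"
  assumes "0 \<notin> A"
  shows "abs_cauchy_summable A \<longleftrightarrow> continuous_map (S_top A) euclidean (kalton_map A)"
proof
  assume "abs_cauchy_summable A"
  then show "continuous_map (S_top A) euclidean (kalton_map A)"
    by (rule continuous_kalton_map_if_abs_cauchy_summable)
next
  assume "continuous_map (S_top A) euclidean (kalton_map A)"
  then show "abs_cauchy_summable A"
    by (rule abs_cauchy_summable_if_continuous_kalton_map)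
qed

end
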